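(* Let $G$ be a connected block graph on $n$ vertices with set of cut vertices $V_c(G)$ and $k$ an integer with $2\le k\le n$. Then $$SW_k(G)=\sum_{v\in V_c(G)} B_k(v) + (k-1)\binom{n}{k}.$$
   Context: A block graph is a graph in which every block (maximal connected induced subgraph without cut vertices) is a clique. For connected $G$ and $S\subseteq V(G)$, the Steiner distance $d(S)$ is the minimum number of edges of a connected subgraph whose vertex set contains $S$; such a minimum subgraph is a tree, called a Steiner tree for $S$; vertices of $S$ are its terminal vertices and the other vertices its inner vertices. $SW_k(G)=\sum_{S\subseteq V(G),|S|=k} d(S)$. The $k$-Steiner betweenness centrality of $v$ is $$B_k(v)=\sum_{A\subseteq V(G)\setminus\{v\},\ |A|=k}\frac{\sigma_A(v)}{\sigma_A},$$ where $\sigma_A$ is the number of Steiner trees for $A$ and $\sigma_A(v)$ is the number of those containing $v$ as an inner vertex. *)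

theory Defs
  imports Main "HOL-Library.Disjoint_Sets" Complex_Main
begin

definition graph :: "'a set \<Rightarrow> 'a set set \<Rightarrow> bool" where
  "graph V E \<longleftrightarrow> finite V \<and> (\<forall>e\<in>E. e \<subseteq> V \<and> card e = 2)"

text \<open>W is connected using only edges of F between vertices of W
  (for W a vertex set of a subgraph with edge set F; for F = E this is
  connectivity of the induced subgraph on W).\<close>
definition conn_on :: "'a set \<Rightarrow> 'a set set \<Rightarrow> bool" where
  "conn_on W F \<longleftrightarrow>
     (\<forall>x\<in>W. \<forall>y\<in>W. (\<lambda>a b. {a, b} \<in> F \<and> a \<in> W \<and> b \<in> W)\<^sup>*\<^sup>* x y)"

definition connected_graph :: "'a set \<Rightarrow> 'a set set \<Rightarrow> bool" where
  "connected_graph V E \<longleftrightarrow> graph V E \<and> V \<noteq> {} \<and> conn_on V E"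

definition cut_vertex :: "'a set \<Rightarrow> 'a set set \<Rightarrow> 'a \<Rightarrow> bool" where
  "cut_vertex V E v \<longleftrightarrow> v \<in> V \<and> \<not> conn_on (V - {v}) E"

definition conn_no_cut :: "'a set set \<Rightarrow> 'a set \<Rightarrow> bool" where
  "conn_no_cut E W \<longleftrightarrow> W \<noteq> {} \<and> conn_on W E \<and> (\<forall>v\<in>W. conn_on (W - {v}) E)"

definition is_block :: "'a set \<Rightarrow> 'a set set \<Rightarrow> 'a set \<Rightarrow> bool" where
  "is_block V E W \<longleftrightarrow> W \<subseteq> V \<and> conn_no_cut E W \<and>
     (\<forall>W'. W \<subseteq> W' \<and> W' \<subseteq> V \<and> conn_no_cut E W' \<longrightarrow> W' = W)"

definition block_graph :: "'a set \<Rightarrow> 'a set set \<Rightarrow> bool" where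
  "block_graph V E \<longleftrightarrow> graph V E \<and>
     (\<forall>W. is_block V E W \<longrightarrow> (\<forall>x\<in>W. \<forall>y\<in>W. x \<noteq> y \<longrightarrow> {x, y} \<in> E))"

definition conn_subgraph_containing ::
  "'a set \<Rightarrow> 'a set set \<Rightarrow> 'a set \<Rightarrow> 'a set \<Rightarrow> 'a set set \<Rightarrow> bool" where
  "conn_subgraph_containing V E S W F \<longleftrightarrow>
     W \<subseteq> V \<and> F \<subseteq> E \<and> (\<forall>e\<in>F. e \<subseteq> W) \<and> conn_on W F \<and> S \<subseteq> W"

definition steiner_dist :: "'a set \<Rightarrow> 'a set set \<Rightarrow> 'a set \<Rightarrow> nat" where
  "steiner_dist V E S =
     (LEAST m. \<exists>W F. conn_subgraph_containing V E S W F \<and> card F = m)"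

definition steiner_trees :: "'a set \<Rightarrow> 'a set set \<Rightarrow> 'a set \<Rightarrow> ('a set \<times> 'a set set) set" where
  "steiner_trees V E S =
     {(W, F). conn_subgraph_containing V E S W F \<and> card F = steiner_dist V E S}"

definition steiner_wiener :: "'a set \<Rightarrow> 'a set set \<Rightarrow> nat \<Rightarrow> nat" where
  "steiner_wiener V E k = (\<Sum>S\<in>{S. S \<subseteq> V \<and> card S = k}. steiner_dist V E S)"

text \<open>k-Steiner betweenness centrality. Since v is not in A, v is an inner
  vertex of a Steiner tree (W,F) for A iff v is in W.\<close>
definition steiner_betweenness :: "'a set \<Rightarrow> 'a set set \<Rightarrow> nat \<Rightarrow> 'a \<Rightarrow> real" where
  "steiner_betweenness V E k v =
     (\<Sum>A\<in>{A. A \<subseteq> V - {v} \<and> card A = k}.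
        real (card {(W, F) \<in> steiner_trees V E A. v \<in> W \<and> v \<notin> A})
        / real (card (steiner_trees V E A)))"

end

theory Submission
  imports Defs "HOL-Library.Transitive_Closure_Table"
begin

text \<open>In a block graph the Steiner trees for a terminal set A are rigid: their vertex set is
  exactly A together with the vertices separating two terminals of A. Separating vertices lie on
  every connected subgraph containing A. Conversely, if an inner vertex c of a Steiner tree
  separated no terminals, minimality would put all tree neighbours of c into the component of the
  terminals in G - c. Two neighbours of c joined by a path avoiding c lie on a cycle, hence in one
  block, hence are adjacent; so the star at c could be re-centred at one of its neighbours, saving
  an edge. Therefore d(A) = |A| + |sep A| - 1, the fraction in B_k(v) is 1 or 0 according as v
  separates A or not, separating vertices are cut vertices, and counting the pairs (v, A) with
  v separating A in two ways gives the identity.\<close>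

definition adj :: "'a set set \<Rightarrow> 'a set \<Rightarrow> 'a \<Rightarrow> 'a \<Rightarrow> bool" where
  "adj F W a b \<longleftrightarrow> {a, b} \<in> F \<and> a \<in> W \<and> b \<in> W"

lemma conn_on_iff_adj: "conn_on W F \<longleftrightarrow> (\<forall>x\<in>W. \<forall>y\<in>W. (adj F W)\<^sup>*\<^sup>* x y)"
  unfolding conn_on_def adj_def[abs_def] ..

lemma symp_adj: "symp (adj F W)"
  by (auto intro: sympI simp: adj_def insert_commute)

lemma adj_sym: "adj F W a b \<Longrightarrow> adj F W b a"
  using sympD[OF symp_adj] .

lemma adj_rtranclp_sym: "(adj F W)\<^sup>*\<^sup>* a b \<Longrightarrow> (adj F W)\<^sup>*\<^sup>* b a"
  using sympD[OF symp_rtranclp[OF symp_adj]] .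

lemma adj_rtranclp_mono:
  "(adj F W)\<^sup>*\<^sup>* a b \<Longrightarrow> F \<subseteq> F' \<Longrightarrow> W \<subseteq> W' \<Longrightarrow> (adj F' W')\<^sup>*\<^sup>* a b"
  by (rule mono_rtranclp[rule_format, of "adj F W"]) (auto simp: adj_def)

lemma adj_rtranclp_mem: "(adj F W)\<^sup>*\<^sup>* a b \<Longrightarrow> a = b \<or> a \<in> W \<and> b \<in> W"
  by (induction rule: rtranclp_induct) (auto simp: adj_def)

lemma conn_onI:
  assumes "\<And>u. u \<in> W \<Longrightarrow> (adj F W)\<^sup>*\<^sup>* u h"
  shows "conn_on W F"
  unfolding conn_on_iff_adj
  using assms adj_rtranclp_sym rtranclp_trans by metis

lemma adj_rtranclp_exit_edge:
  assumes "(adj F W)\<^sup>*\<^sup>* r u" "r \<in> S" "u \<notin> S"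
  obtains a b where "{a, b} \<in> F" "a \<in> S" "b \<in> W" "b \<notin> S"
proof -
  have "v \<in> S \<or> (\<exists>a b. {a, b} \<in> F \<and> a \<in> S \<and> b \<in> W \<and> b \<notin> S)"
    if "(adj F W)\<^sup>*\<^sup>* r v" for v
    using that by (induction rule: rtranclp_induct) (use assms(2) in \<open>auto simp: adj_def\<close>)
  then show ?thesis using assms that by blast
qed

lemma conn_on_grow_tree:
  assumes "finite W" "r \<in> W" "conn_on W F" "\<forall>e\<in>F. e \<subseteq> W" "1 \<le> n"
  shows "n \<le> card W \<Longrightarrow> \<exists>S T. S \<subseteq> W \<and> r \<in> S \<and> card S = n \<and> T \<subseteq> F \<and>
           (\<forall>e\<in>T. e \<subseteq> S) \<and> card T = n - 1 \<and> conn_on S T"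
  using assms(5)
proof (induction n rule: nat_induct_at_least)
  case base
  have "conn_on {r} {}" unfolding conn_on_def by simp
  then show ?case using assms(2) by (intro exI[of _ "{r}"] exI[of _ "{}"]) auto
next
  case (Suc n)
  then obtain S T where S: "S \<subseteq> W" "r \<in> S" "card S = n" "T \<subseteq> F" "\<forall>e\<in>T. e \<subseteq> S"
      "card T = n - 1" "conn_on S T"
    by auto
  have "S \<noteq> W" using S(3) Suc.prems by auto
  then obtain u where u: "u \<in> W" "u \<notin> S" using S(1) by blast
  have "(adj F W)\<^sup>*\<^sup>* r u" using assms(2,3) u(1) unfolding conn_on_iff_adj by blast
  then obtain a b where ab: "{a, b} \<in> F" "a \<in> S" "b \<in> W" "b \<notin> S"
    using adj_rtranclp_exit_edge[OF _ S(2) u(2)] by blast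
  have "finite S" using S(1) assms(1) finite_subset by blast
  then have finite: "finite S" "finite T"
    using S(5) finite_subset[of T "Pow S"] by auto
  let ?S = "insert b S" and ?T = "insert {a, b} T"
  have "conn_on ?S ?T"
  proof (rule conn_onI[where h = a])
    fix z assume z: "z \<in> ?S"
    show "(adj ?T ?S)\<^sup>*\<^sup>* z a"
    proof (cases "z = b")
      case True
      have "adj ?T ?S b a" using ab(1,2) by (auto simp: adj_def insert_commute)
      then show ?thesis using True by blast
    next
      case False
      then have "(adj T S)\<^sup>*\<^sup>* z a" using S(7) z ab(2) unfolding conn_on_iff_adj by blast
      then show ?thesis by (rule adj_rtranclp_mono) auto
    qed
  qed
  moreover have "{a, b} \<notin> T" using S(5) ab(4) by auto
  moreover have "card ?S = Suc n" "card ?T = Suc n - 1"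
    using S(3,6) ab(4) finite Suc.hyps \<open>{a, b} \<notin> T\<close> by simp_all
  moreover have "?S \<subseteq> W" "r \<in> ?S" "?T \<subseteq> F" "\<forall>e\<in>?T. e \<subseteq> ?S"
    using S(1,2,4,5) ab(1-3) by auto
  ultimately show ?case by (intro exI[of _ ?S] exI[of _ ?T] conjI) assumption+
qed

lemma conn_on_spanning_tree:
  assumes "finite W" "W \<noteq> {}" "conn_on W F" "\<forall>e\<in>F. e \<subseteq> W"
  obtains T where "T \<subseteq> F" "card T = card W - 1" "conn_on W T" "\<forall>e\<in>T. e \<subseteq> W"
proof -
  obtain r where r: "r \<in> W" using assms(2) by blast
  have "1 \<le> card W" using assms(1,2) by (simp add: Suc_leI card_gt_0_iff)
  from conn_on_grow_tree[OF assms(1) r assms(3,4) this order_refl]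
  obtain S T where S: "S \<subseteq> W" "card S = card W" and T: "T \<subseteq> F" "\<forall>e\<in>T. e \<subseteq> S"
      "card T = card W - 1" "conn_on S T"
    by blast
  have "S = W" using card_subset_eq[OF assms(1) S] .
  with T show ?thesis using that by blast
qed

lemma rtrancl_path_adj_subset:
  "rtrancl_path (adj F T) x xs y \<Longrightarrow> set xs \<subseteq> T \<and> (xs \<noteq> [] \<longrightarrow> x \<in> T)"
  by (induction rule: rtrancl_path.induct) (auto simp: adj_def)

lemma rtrancl_path_last_mem: "rtrancl_path r x xs y \<Longrightarrow> y \<in> set (x # xs)"
  by (induction rule: rtrancl_path.induct) auto

lemma rtrancl_path_adj_conn:
  "rtrancl_path (adj F T) x xs y \<Longrightarrow> \<forall>z\<in>set (x # xs). (adj F (set (x # xs)))\<^sup>*\<^sup>* z y"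
proof (induction rule: rtrancl_path.induct)
  case (base x)
  then show ?case by simp
next
  case (step x y ys z)
  let ?P = "set (x # y # ys)"
  have IH: "(adj F ?P)\<^sup>*\<^sup>* w z" if "w \<in> set (y # ys)" for w
  proof -
    have "(adj F (set (y # ys)))\<^sup>*\<^sup>* w z" using step.IH that by blast
    then show ?thesis by (rule adj_rtranclp_mono) auto
  qed
  have "adj F ?P x y" using step.hyps(1) by (simp add: adj_def)
  then have "(adj F ?P)\<^sup>*\<^sup>* x z" using IH[of y] by (simp add: converse_rtranclp_into_rtranclp)
  with IH show ?case by auto
qed

lemma rtrancl_path_adj_remove_vertex:
  "rtrancl_path (adj F T) x xs y \<Longrightarrow> distinct (x # xs) \<Longrightarrow> z \<in> set (x # xs) - {u} \<Longrightarrow>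
   (adj F (set (x # xs) - {u}))\<^sup>*\<^sup>* z x \<or> (adj F (set (x # xs) - {u}))\<^sup>*\<^sup>* z y"
proof (induction arbitrary: z rule: rtrancl_path.induct)
  case (base x)
  then show ?case by simp
next
  case (step x y1 ys y)
  let ?S = "set (x # y1 # ys) - {u}" and ?Q = "set (y1 # ys)"
  have sub: "?Q - {u} \<subseteq> ?S" by auto
  show ?case
  proof (cases "z = x")
    case False
    then have zQ: "z \<in> ?Q - {u}" using step.prems(2) by auto
    show ?thesis
    proof (cases "u = x")
      case True
      have "(adj F ?Q)\<^sup>*\<^sup>* z y" using rtrancl_path_adj_conn[OF step.hyps(2)] zQ by blast
      moreover have "?Q \<subseteq> ?S" using True step.prems(1) by auto
      ultimately have "(adj F ?S)\<^sup>*\<^sup>* z y" by (rule adj_rtranclp_mono[OF _ order_refl])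
      then show ?thesis ..
    next
      case False
      from step.IH[of z] step.prems(1) zQ
      consider "(adj F (?Q - {u}))\<^sup>*\<^sup>* z y1" | "(adj F (?Q - {u}))\<^sup>*\<^sup>* z y" by auto
      then show ?thesis
      proof cases
        case 1
        then have "y1 \<in> ?Q - {u}" using adj_rtranclp_mem[OF 1] zQ by blast
        then have "adj F ?S y1 x" using step.hyps(1) False by (auto simp: adj_def insert_commute)
        moreover have "(adj F ?S)\<^sup>*\<^sup>* z y1" using adj_rtranclp_mono[OF 1 order_refl sub] .
        ultimately show ?thesis by (meson rtranclp.rtrancl_into_rtrancl)
      next
        case 2
        then show ?thesis using adj_rtranclp_mono[OF 2 order_refl sub] by blast
      qed
    qed
  qed simp
qed

lemma cycle_minus_path_vertex_conn_on:
  assumes path: "rtrancl_path (adj E T) x xs y" and dist: "distinct (x # xs)"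
    and w: "{w, x} \<in> E" "{w, y} \<in> E" and v: "v \<in> set (x # xs)"
  shows "conn_on (insert w (set (x # xs) - {v})) E"
proof (rule conn_onI[where h = w])
  let ?P = "set (x # xs) - {v}"
  let ?D = "insert w ?P"
  have to_w: "(adj E ?D)\<^sup>*\<^sup>* z w" if "z \<in> ?P" and "(adj E ?P)\<^sup>*\<^sup>* z t" and "{w, t} \<in> E" for z t
  proof -
    have "t \<in> ?P" using adj_rtranclp_mem[OF that(2)] that(1) by blast
    then have "adj E ?D t w" using that(3) by (auto simp: adj_def insert_commute)
    have "(adj E ?D)\<^sup>*\<^sup>* z t" using that(2) by (rule adj_rtranclp_mono) auto
    then show ?thesis using \<open>adj E ?D t w\<close> by (rule rtranclp.rtrancl_into_rtrancl)
  qed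
  fix z assume "z \<in> ?D"
  then consider "z = w" | "z \<in> ?P" by blast
  then show "(adj E ?D)\<^sup>*\<^sup>* z w"
  proof cases
    case 2
    from rtrancl_path_adj_remove_vertex[OF path dist 2]
    show ?thesis
    proof
      assume "(adj E ?P)\<^sup>*\<^sup>* z x"
      then show ?thesis using to_w[OF 2] w(1) by blast
    next
      assume "(adj E ?P)\<^sup>*\<^sup>* z y"
      then show ?thesis using to_w[OF 2] w(2) by blast
    qed
  qed simp
qed

lemma cycle_conn_no_cut:
  assumes path: "rtrancl_path (adj E T) x xs y" and dist: "distinct (x # xs)"
    and w: "w \<notin> set (x # xs)" "{w, x} \<in> E" "{w, y} \<in> E"
  shows "conn_no_cut E (insert w (set (x # xs)))"
proof -
  let ?P = "set (x # xs)"
  let ?C = "insert w ?P"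
  have to_y: "(adj E ?P)\<^sup>*\<^sup>* z y" if "z \<in> ?P" for z
    using rtrancl_path_adj_conn[OF path] that by blast
  have "conn_on ?C E"
  proof (rule conn_onI[where h = y])
    fix z assume "z \<in> ?C"
    moreover have "adj E ?C w y" using w(3) rtrancl_path_last_mem[OF path] by (simp add: adj_def)
    moreover have "(adj E ?C)\<^sup>*\<^sup>* z y" if "z \<in> ?P"
      using to_y[OF that] by (rule adj_rtranclp_mono) auto
    ultimately show "(adj E ?C)\<^sup>*\<^sup>* z y" by auto
  qed
  moreover have "conn_on (?C - {v}) E" if "v \<in> ?C" for v
  proof (cases "v = w")
    case True
    then have "?C - {v} = ?P" using w(1) by auto
    then show ?thesis using conn_onI[where h = y, OF to_y] by simp
  next
    case False
    then have "?C - {v} = insert w (?P - {v})" "v \<in> ?P" using that by auto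
    then show ?thesis using cycle_minus_path_vertex_conn_on[OF path dist w(2,3)] by simp
  qed
  ultimately show ?thesis unfolding conn_no_cut_def by blast
qed

lemma conn_no_cut_subset_block:
  assumes "finite V" "C \<subseteq> V" "conn_no_cut E C"
  obtains B where "C \<subseteq> B" "is_block V E B"
proof -
  let ?M = "{W. W \<subseteq> V \<and> conn_no_cut E W}"
  have "finite ?M" using assms(1) by simp
  then obtain B where B: "B \<in> ?M" "C \<subseteq> B" "\<forall>W\<in>?M. B \<subseteq> W \<longrightarrow> B = W"
    using finite_has_maximal2[of ?M C] assms(2,3) by blast
  have "is_block V E B" using B(1,3) unfolding is_block_def by auto
  with B(2) show ?thesis by (rule that)
qed

lemma block_graph_conn_no_cut_adjacent:
  assumes "block_graph V E" "C \<subseteq> V" "conn_no_cut E C" "a \<in> C" "b \<in> C" "a \<noteq> b"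
  shows "{a, b} \<in> E"
proof -
  have "finite V" using assms(1) unfolding block_graph_def graph_def by blast
  then obtain B where "C \<subseteq> B" "is_block V E B"
    using conn_no_cut_subset_block assms(2,3) by blast
  then show ?thesis using assms(1,4-6) unfolding block_graph_def by blast
qed

definition nbrs :: "'a set set \<Rightarrow> 'a \<Rightarrow> 'a set" where
  "nbrs F c = {y. {c, y} \<in> F \<and> y \<noteq> c}"

text \<open>Contracting the edge {c, x} of F into x: the star at c is re-centred at x.\<close>

definition move_star :: "'a \<Rightarrow> 'a \<Rightarrow> 'a set set \<Rightarrow> 'a set set" where
  "move_star c x F = {e \<in> F. c \<notin> e} \<union> (\<lambda>y. {x, y}) ` (nbrs F c - {x})"

lemma move_star_subset:
  assumes "\<forall>e\<in>F. e \<subseteq> W" "x \<in> nbrs F c" "e \<in> move_star c x F"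
  shows "e \<subseteq> W - {c}"
  using assms unfolding move_star_def nbrs_def by auto

lemma move_star_edges:
  assumes "F \<subseteq> E" "\<And>y. y \<in> nbrs F c - {x} \<Longrightarrow> {x, y} \<in> E"
  shows "move_star c x F \<subseteq> E"
  using assms unfolding move_star_def by blast

definition contract :: "'a \<Rightarrow> 'a \<Rightarrow> 'a \<Rightarrow> 'a" where
  "contract c x v = (if v = c then x else v)"

lemma adj_move_star_contract:
  assumes FW: "\<forall>e\<in>F. e \<subseteq> W" and x: "x \<in> nbrs F c" and yz: "{y, z} \<in> F"
  shows "contract c x y = contract c x z \<or>
         adj (move_star c x F) (W - {c}) (contract c x y) (contract c x z)"
proof -
  let ?W = "W - {c}" and ?F = "move_star c x F"
  have xW: "x \<in> ?W" using x FW unfolding nbrs_def by auto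
  have star: "contract c x u = x \<or> adj ?F ?W x (contract c x u)" if "{c, u} \<in> F" for u
  proof (cases "u = c \<or> u = x")
    case False
    then have "{x, u} \<in> ?F" "u \<in> ?W" using that FW unfolding move_star_def nbrs_def by auto
    then show ?thesis using xW False by (simp add: adj_def contract_def)
  qed (auto simp: contract_def)
  consider "y = c" | "z = c" "y \<noteq> c" | "y \<noteq> c" "z \<noteq> c" by blast
  then show ?thesis
  proof cases
    case 1
    then show ?thesis using star[of z] yz by (auto simp: contract_def)
  next
    case 2
    then have "{c, y} \<in> F" using yz by (simp add: insert_commute)
    then show ?thesis using star[of y] 2 by (auto simp: contract_def dest: adj_sym)
  next
    case 3
    then have "{y, z} \<in> ?F" "y \<in> ?W" "z \<in> ?W" using yz FW unfolding move_star_def by auto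
    then show ?thesis using 3 by (simp add: adj_def contract_def)
  qed
qed

lemma conn_on_move_star:
  assumes conn: "conn_on W F" and FW: "\<forall>e\<in>F. e \<subseteq> W" and x: "x \<in> nbrs F c"
  shows "conn_on (W - {c}) (move_star c x F)"
proof -
  let ?W = "W - {c}" and ?F = "move_star c x F"
  have walk: "(adj ?F ?W)\<^sup>*\<^sup>* (contract c x u) (contract c x v)" if "(adj F W)\<^sup>*\<^sup>* u v" for u v
    using that
  proof (induction rule: rtranclp_induct)
    case (step y z)
    have "{y, z} \<in> F" using step.hyps(2) by (simp add: adj_def)
    then consider "contract c x y = contract c x z" | "adj ?F ?W (contract c x y) (contract c x z)"
      using adj_move_star_contract[OF FW x] by blast
    then show ?case
      by cases (use step.IH in \<open>auto intro: rtranclp.rtrancl_into_rtrancl\<close>)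
  qed simp
  have "x \<in> ?W" using x FW unfolding nbrs_def by auto
  show ?thesis
  proof (rule conn_onI[where h = x])
    fix u assume "u \<in> ?W"
    then have "(adj F W)\<^sup>*\<^sup>* u x" "contract c x u = u" "contract c x x = x"
      using conn \<open>x \<in> ?W\<close> unfolding conn_on_iff_adj contract_def by auto
    then show "(adj ?F ?W)\<^sup>*\<^sup>* u x" using walk[of u x] by simp
  qed
qed

lemma card_move_star_less:
  assumes "finite F" "x \<in> nbrs F c"
  shows "card (move_star c x F) < card F"
proof -
  let ?out = "{e \<in> F. c \<notin> e}" and ?at = "{e \<in> F. c \<in> e}"
  have "inj_on (\<lambda>y. {c, y}) (nbrs F c)" unfolding nbrs_def inj_on_def by (auto simp: doubleton_eq_iff)
  moreover have "(\<lambda>y. {c, y}) ` nbrs F c \<subseteq> ?at" unfolding nbrs_def by auto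
  moreover have "finite ?at" using assms(1) by simp
  ultimately have fin: "finite (nbrs F c)" and le: "card (nbrs F c) \<le> card ?at"
    by (rule inj_on_finite, rule card_inj_on_le)
  have "card (move_star c x F) \<le> card ?out + card ((\<lambda>y. {x, y}) ` (nbrs F c - {x}))"
    unfolding move_star_def by (rule card_Un_le)
  also have "\<dots> \<le> card ?out + card (nbrs F c - {x})"
    using fin by (simp add: card_image_le)
  also have "\<dots> < card ?out + card ?at"
  proof -
    have "card (nbrs F c) > 0" using fin assms(2) card_gt_0_iff by blast
    then show ?thesis using le fin assms(2) by (simp add: card_Diff_singleton)
  qed
  also have "\<dots> = card F"
  proof -
    have "F = ?out \<union> ?at" by blast
    moreover have "?out \<inter> ?at = {}" by blast
    ultimately show ?thesis using assms(1) card_Un_disjoint[of ?out ?at] by simp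
  qed
  finally show ?thesis .
qed

lemma conn_on_restrict_component:
  assumes conn: "conn_on W F" and c: "c \<in> W"
    and closed: "\<And>y z. y \<in> K \<Longrightarrow> {y, z} \<in> F \<Longrightarrow> z \<in> W \<Longrightarrow> z \<noteq> c \<Longrightarrow> z \<in> K"
  shows "conn_on (W \<inter> insert c K) {e \<in> F. e \<subseteq> W \<inter> insert c K}"
proof -
  let ?W = "W \<inter> insert c K"
  let ?F = "{e \<in> F. e \<subseteq> ?W}"
  have walk: "(v \<in> K \<and> (adj ?F ?W)\<^sup>*\<^sup>* u v) \<or> (adj ?F ?W)\<^sup>*\<^sup>* u c"
    if "(adj F W)\<^sup>*\<^sup>* u v" "u \<in> K" for u v
    using that(1)
  proof (induction rule: rtranclp_induct)
    case (step y z)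
    have yz: "{y, z} \<in> F" "y \<in> W" "z \<in> W" using step.hyps(2) by (auto simp: adj_def)
    from step.IH show ?case
    proof
      assume y: "y \<in> K \<and> (adj ?F ?W)\<^sup>*\<^sup>* u y"
      have "z = c \<or> z \<in> K" using closed y yz by blast
      then have "adj ?F ?W y z" using y yz c by (auto simp: adj_def)
      then have "(adj ?F ?W)\<^sup>*\<^sup>* u z" using y by (meson rtranclp.rtrancl_into_rtrancl)
      then show ?case using \<open>z = c \<or> z \<in> K\<close> by blast
    qed blast
  qed (use that(2) in blast)
  show ?thesis
  proof (rule conn_onI[where h = c])
    fix u assume u: "u \<in> ?W"
    show "(adj ?F ?W)\<^sup>*\<^sup>* u c"
    proof (cases "u = c")
      case False
      then have "u \<in> K" using u by blast
      moreover have "(adj F W)\<^sup>*\<^sup>* u c" using conn u c unfolding conn_on_iff_adj by blast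
      ultimately show ?thesis using walk by blast
    qed simp
  qed
qed

definition separating_vertices :: "'a set \<Rightarrow> 'a set set \<Rightarrow> 'a set \<Rightarrow> 'a set" where
  "separating_vertices V E A =
     {c \<in> V - A. \<exists>a\<in>A. \<exists>b\<in>A. \<not> (adj E (V - {c}))\<^sup>*\<^sup>* a b}"

lemma separating_vertex_cut_vertex:
  "c \<in> separating_vertices V E A \<Longrightarrow> A \<subseteq> V \<Longrightarrow> cut_vertex V E c"
  unfolding separating_vertices_def cut_vertex_def conn_on_iff_adj by blast

locale conn_graph =
  fixes V :: "'a set" and E :: "'a set set"
  assumes connected: "connected_graph V E"
begin

lemma finite_V: "finite V"
  and edge_subset: "e \<in> E \<Longrightarrow> e \<subseteq> V"
  and card_edge: "e \<in> E \<Longrightarrow> card e = 2"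
  and conn_on_V: "conn_on V E"
  using connected unfolding connected_graph_def graph_def by auto

lemma finite_E: "finite E"
  using finite_subset[of E "Pow V"] finite_V edge_subset by blast

lemma edge_neq: "{a, b} \<in> E \<Longrightarrow> a \<noteq> b"
  using card_edge by fastforce

abbreviation "d A \<equiv> steiner_dist V E A"
abbreviation "ST A \<equiv> steiner_trees V E A"

lemma steiner_treeD:
  assumes "(W, F) \<in> ST A"
  shows "W \<subseteq> V" "F \<subseteq> E" "\<forall>e\<in>F. e \<subseteq> W" "conn_on W F" "A \<subseteq> W" "card F = d A"
  using assms unfolding steiner_trees_def conn_subgraph_containing_def by blast+

lemma steiner_dist_le: "conn_subgraph_containing V E A W F \<Longrightarrow> d A \<le> card F"
  unfolding steiner_dist_def by (rule Least_le) blast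

lemma steiner_tree_exists:
  assumes "A \<subseteq> V"
  obtains W F where "(W, F) \<in> ST A"
proof -
  have "conn_subgraph_containing V E A V E"
    unfolding conn_subgraph_containing_def using assms edge_subset conn_on_V by blast
  then have "\<exists>m W F. conn_subgraph_containing V E A W F \<and> card F = m" by blast
  then have "\<exists>W F. conn_subgraph_containing V E A W F \<and> card F = d A"
    unfolding steiner_dist_def by (rule LeastI_ex)
  then show ?thesis using that unfolding steiner_trees_def by blast
qed

lemma finite_steiner_trees: "finite (ST A)"
proof (rule finite_subset)
  show "ST A \<subseteq> Pow V \<times> Pow E" using steiner_treeD(1,2) by fastforce
qed (simp add: finite_V finite_E)

lemma card_steiner_tree_edges:
  assumes st: "(W, F) \<in> ST A" and "A \<noteq> {}"
  shows "card F = card W - 1"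
proof -
  note P = steiner_treeD[OF st]
  have finite: "finite W" "finite F" using P(1,2) finite_V finite_E finite_subset by blast+
  have "W \<noteq> {}" using P(5) assms(2) by blast
  with finite(1) obtain T where T: "T \<subseteq> F" "card T = card W - 1" "conn_on W T" "\<forall>e\<in>T. e \<subseteq> W"
    by (rule conn_on_spanning_tree[OF _ _ P(4,3)])
  have "conn_subgraph_containing V E A W T"
    unfolding conn_subgraph_containing_def using P T by blast
  then have "card F \<le> card T" using P(6) steiner_dist_le by simp
  then show ?thesis using T(1,2) card_mono[OF finite(2) T(1)] by linarith
qed

lemma steiner_tree_edges_minimal:
  assumes "(W, F) \<in> ST A" "conn_subgraph_containing V E A W' F'" "F' \<subseteq> F"
  shows "F' = F"
proof -
  have "finite F" using steiner_treeD(2)[OF assms(1)] finite_E finite_subset by blast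
  moreover have "card F \<le> card F'"
    using steiner_dist_le[OF assms(2)] steiner_treeD(6)[OF assms(1)] by simp
  ultimately show ?thesis using card_seteq[OF _ assms(3)] by blast
qed

lemma steiner_inner_vertex_nonadjacent_nbrs:
  assumes st: "(W, F) \<in> ST A" and "A \<noteq> {}" "c \<in> W" "c \<notin> A"
  obtains x y where "x \<in> nbrs F c" "y \<in> nbrs F c" "x \<noteq> y" "{x, y} \<notin> E"
proof -
  note P = steiner_treeD[OF st]
  obtain a where "a \<in> A" using assms(2) by blast
  then have "(adj F W)\<^sup>*\<^sup>* c a" "c \<noteq> a" using P(4,5) assms(3,4) unfolding conn_on_iff_adj by auto
  then obtain x where "adj F W c x" by (auto elim: converse_rtranclpE)
  then have x: "x \<in> nbrs F c" using P(2) edge_neq unfolding adj_def nbrs_def by blast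
  show ?thesis
  proof (rule ccontr)
    assume "\<not> ?thesis"
    then have "\<And>y. y \<in> nbrs F c - {x} \<Longrightarrow> {x, y} \<in> E" using that x by blast
    then have "move_star c x F \<subseteq> E" using P(2) by (rule move_star_edges[rotated])
    moreover have "\<forall>e\<in>move_star c x F. e \<subseteq> W - {c}" using move_star_subset[OF P(3) x] by blast
    moreover have "conn_on (W - {c}) (move_star c x F)" using conn_on_move_star[OF P(4,3) x] .
    ultimately have "conn_subgraph_containing V E A (W - {c}) (move_star c x F)"
      unfolding conn_subgraph_containing_def using P(1,5) assms(4) by blast
    then have "card F \<le> card (move_star c x F)" using P(6) steiner_dist_le by simp
    moreover have "finite F" using P(2) finite_E finite_subset by blast
    ultimately show False using card_move_star_less[OF _ x] by fastforce
  qed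
qed

lemma separating_vertices_subset_steiner_tree:
  assumes "(W, F) \<in> ST A"
  shows "separating_vertices V E A \<subseteq> W"
proof
  fix c assume "c \<in> separating_vertices V E A"
  then obtain a b where ab: "a \<in> A" "b \<in> A" "\<not> (adj E (V - {c}))\<^sup>*\<^sup>* a b"
    unfolding separating_vertices_def by blast
  note P = steiner_treeD[OF assms]
  have "(adj F W)\<^sup>*\<^sup>* a b" using P(4,5) ab(1,2) unfolding conn_on_iff_adj by blast
  show "c \<in> W"
  proof (rule ccontr)
    assume "c \<notin> W"
    then have "W \<subseteq> V - {c}" using P(1) by blast
    then have "(adj E (V - {c}))\<^sup>*\<^sup>* a b"
      using \<open>(adj F W)\<^sup>*\<^sup>* a b\<close> P(2) by (rule adj_rtranclp_mono[rotated 2])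
    with ab(3) show False by blast
  qed
qed

lemma steiner_nbrs_in_terminal_component:
  assumes st: "(W, F) \<in> ST A" and c: "c \<in> W" "c \<notin> A" and a0: "a0 \<in> A"
    and terminals: "\<forall>a\<in>A. (adj E (V - {c}))\<^sup>*\<^sup>* a0 a" and x: "x \<in> nbrs F c"
  shows "(adj E (V - {c}))\<^sup>*\<^sup>* a0 x"
proof -
  note P = steiner_treeD[OF st]
  define K where "K = {u. (adj E (V - {c}))\<^sup>*\<^sup>* a0 u}"
  have "a0 \<in> V - {c}" using a0 P(1,5) c(2) by blast
  then have KV: "K \<subseteq> V - {c}" unfolding K_def using adj_rtranclp_mem by fastforce
  let ?W = "W \<inter> insert c K"
  let ?F = "{e \<in> F. e \<subseteq> ?W}"
  have "conn_on ?W ?F"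
  proof (rule conn_on_restrict_component[OF P(4) c(1)])
    fix y z assume "y \<in> K" "{y, z} \<in> F" "z \<in> W" "z \<noteq> c"
    then have "adj E (V - {c}) y z" using KV P(1,2) by (auto simp: adj_def)
    with \<open>y \<in> K\<close> show "z \<in> K" unfolding K_def by (simp add: rtranclp.rtrancl_into_rtrancl)
  qed
  moreover have "A \<subseteq> ?W" using P(5) terminals unfolding K_def by blast
  ultimately have "conn_subgraph_containing V E A ?W ?F"
    unfolding conn_subgraph_containing_def using P(1,2) by blast
  txt \<open>Pruning the tree outside c and the terminals' component loses nothing, by minimality.\<close>
  then have "?F = F" using steiner_tree_edges_minimal[OF st] by blast
  then have "{c, x} \<in> ?F" using x unfolding nbrs_def by simp
  then have "x \<in> K" using x unfolding nbrs_def by blast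
  then show ?thesis unfolding K_def by simp
qed

end

locale conn_block_graph = conn_graph +
  assumes block: "block_graph V E"
begin

text \<open>A path from x to y avoiding w closes up through w to a cycle, which lies in a block.\<close>

lemma common_nbrs_adjacent:
  assumes w: "{w, x} \<in> E" "{w, y} \<in> E" and "x \<noteq> y" and walk: "(adj E (V - {w}))\<^sup>*\<^sup>* x y"
  shows "{x, y} \<in> E"
proof -
  obtain xs where "rtrancl_path (adj E (V - {w})) x xs y"
    using walk rtranclp_eq_rtrancl_path by metis
  then obtain xs where path: "rtrancl_path (adj E (V - {w})) x xs y" and dist: "distinct (x # xs)"
    using rtrancl_path_distinct by metis
  have "xs \<noteq> []" using path \<open>x \<noteq> y\<close> by (auto elim: rtrancl_path.cases)
  then have "set (x # xs) \<subseteq> V - {w}" using rtrancl_path_adj_subset[OF path] by auto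
  moreover have "w \<in> V" using edge_subset[OF w(1)] by blast
  ultimately have "insert w (set (x # xs)) \<subseteq> V" "w \<notin> set (x # xs)" by auto
  moreover have "conn_no_cut E (insert w (set (x # xs)))"
    using cycle_conn_no_cut[OF path dist _ w] calculation(2) .
  moreover have "y \<in> set (x # xs)" using rtrancl_path_last_mem[OF path] .
  ultimately show ?thesis
    using block_graph_conn_no_cut_adjacent[OF block, of "insert w (set (x # xs))" x y] \<open>x \<noteq> y\<close>
    by simp
qed

lemma steiner_inner_vertex_separating:
  assumes st: "(W, F) \<in> ST A" and "A \<noteq> {}" and c: "c \<in> W" "c \<notin> A"
  shows "c \<in> separating_vertices V E A"
proof (rule ccontr)
  assume "c \<notin> separating_vertices V E A"
  moreover have "c \<in> V" using steiner_treeD(1)[OF st] c(1) by blast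
  ultimately have conn: "\<forall>a\<in>A. \<forall>b\<in>A. (adj E (V - {c}))\<^sup>*\<^sup>* a b"
    using c(2) unfolding separating_vertices_def by blast
  obtain a0 where a0: "a0 \<in> A" using assms(2) by blast
  have to_nbr: "(adj E (V - {c}))\<^sup>*\<^sup>* a0 y" if "y \<in> nbrs F c" for y
    using steiner_nbrs_in_terminal_component[OF st c a0 _ that] conn a0 by blast
  obtain x y where xy: "x \<in> nbrs F c" "y \<in> nbrs F c" "x \<noteq> y" "{x, y} \<notin> E"
    using steiner_inner_vertex_nonadjacent_nbrs[OF st assms(2) c] .
  have "(adj E (V - {c}))\<^sup>*\<^sup>* x y"
    using adj_rtranclp_sym[OF to_nbr[OF xy(1)]] to_nbr[OF xy(2)] by (rule rtranclp_trans)
  moreover have "{c, x} \<in> E" "{c, y} \<in> E"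
    using xy(1,2) steiner_treeD(2)[OF st] unfolding nbrs_def by blast+
  ultimately show False using common_nbrs_adjacent xy(3,4) by blast
qed

lemma steiner_tree_vertices:
  assumes "(W, F) \<in> ST A" "A \<noteq> {}"
  shows "W = A \<union> separating_vertices V E A"
  using separating_vertices_subset_steiner_tree[OF assms(1)] steiner_treeD(5)[OF assms(1)]
    steiner_inner_vertex_separating[OF assms] by blast

lemma steiner_dist_eq:
  assumes "A \<subseteq> V" "A \<noteq> {}"
  shows "d A = card (separating_vertices V E A) + (card A - 1)"
proof -
  obtain W F where st: "(W, F) \<in> ST A" using steiner_tree_exists[OF assms(1)] .
  have "finite A" "finite (separating_vertices V E A)"
    using assms(1) finite_V finite_subset unfolding separating_vertices_def by auto
  moreover have "A \<inter> separating_vertices V E A = {}" unfolding separating_vertices_def by blast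
  ultimately have "card W = card A + card (separating_vertices V E A)"
    using steiner_tree_vertices[OF st assms(2)] card_Un_disjoint by metis
  moreover have "card A > 0" using \<open>finite A\<close> assms(2) by (simp add: card_gt_0_iff)
  ultimately show ?thesis
    using card_steiner_tree_edges[OF st assms(2)] steiner_treeD(6)[OF st] by simp
qed

lemma steiner_betweenness_ratio:
  assumes "A \<subseteq> V" "A \<noteq> {}" "v \<notin> A"
  shows "real (card {(W, F) \<in> ST A. v \<in> W \<and> v \<notin> A}) / real (card (ST A))
           = of_bool (v \<in> separating_vertices V E A)"
proof -
  have "{(W, F) \<in> ST A. v \<in> W \<and> v \<notin> A} = {p \<in> ST A. v \<in> separating_vertices V E A}"
    using steiner_tree_vertices[OF _ assms(2)] assms(3) by blast
  moreover have "ST A \<noteq> {}" using steiner_tree_exists[OF assms(1)] by blast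
  then have "card (ST A) > 0" using finite_steiner_trees by (simp add: card_gt_0_iff)
  ultimately show ?thesis by simp
qed

lemma steiner_betweenness_eq:
  assumes "1 \<le> k"
  shows "steiner_betweenness V E k v =
           card {A. A \<subseteq> V \<and> card A = k \<and> v \<in> separating_vertices V E A}"
proof -
  let ?Av = "{A. A \<subseteq> V - {v} \<and> card A = k}"
  have "finite ?Av" using finite_V by simp
  have "steiner_betweenness V E k v = (\<Sum>A\<in>?Av. of_bool (v \<in> separating_vertices V E A))"
    unfolding steiner_betweenness_def
  proof (rule sum.cong)
    fix A assume "A \<in> ?Av"
    moreover from this have "A \<noteq> {}" using assms by auto
    ultimately show "real (card {(W, F) \<in> ST A. v \<in> W \<and> v \<notin> A}) / real (card (ST A))
        = of_bool (v \<in> separating_vertices V E A)"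
      using steiner_betweenness_ratio by blast
  qed simp
  also have "\<dots> = card (?Av \<inter> {A. v \<in> separating_vertices V E A})"
    using \<open>finite ?Av\<close> by simp
  also have "?Av \<inter> {A. v \<in> separating_vertices V E A} =
             {A. A \<subseteq> V \<and> card A = k \<and> v \<in> separating_vertices V E A}"
    unfolding separating_vertices_def by blast
  finally show ?thesis .
qed

lemma steiner_wiener_eq:
  assumes "1 \<le> k"
  shows "steiner_wiener V E k =
           (\<Sum>A | A \<subseteq> V \<and> card A = k. card (separating_vertices V E A)) + (card V choose k) * (k - 1)"
proof -
  let ?Ak = "{A. A \<subseteq> V \<and> card A = k}"
  have "steiner_wiener V E k = (\<Sum>A\<in>?Ak. card (separating_vertices V E A) + (k - 1))"
    unfolding steiner_wiener_def
  proof (rule sum.cong)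
    fix A assume "A \<in> ?Ak"
    moreover from this have "A \<noteq> {}" using assms by auto
    ultimately show "d A = card (separating_vertices V E A) + (k - 1)" using steiner_dist_eq by simp
  qed simp
  also have "\<dots> = (\<Sum>A\<in>?Ak. card (separating_vertices V E A)) + card ?Ak * (k - 1)"
    by (simp add: sum.distrib)
  finally show ?thesis using n_subsets[OF finite_V] by simp
qed

lemma sum_steiner_betweenness_cut_vertices:
  assumes "1 \<le> k"
  shows "(\<Sum>v | cut_vertex V E v. steiner_betweenness V E k v) =
           real (\<Sum>A | A \<subseteq> V \<and> card A = k. card (separating_vertices V E A))"
proof -
  let ?Ak = "{A. A \<subseteq> V \<and> card A = k}" and ?Cut = "{v. cut_vertex V E v}"
  have "finite ?Cut" using finite_V finite_subset unfolding cut_vertex_def by auto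
  moreover have "finite ?Ak" using finite_V by simp
  moreover have "\<forall>A\<in>?Ak. card {v \<in> ?Cut. v \<in> separating_vertices V E A} = card (separating_vertices V E A)"
  proof
    fix A assume "A \<in> ?Ak"
    then have "{v \<in> ?Cut. v \<in> separating_vertices V E A} = separating_vertices V E A"
      using separating_vertex_cut_vertex[of _ V E A] by auto
    then show "card {v \<in> ?Cut. v \<in> separating_vertices V E A} = card (separating_vertices V E A)"
      by simp
  qed
  ultimately have "(\<Sum>v\<in>?Cut. card {A \<in> ?Ak. v \<in> separating_vertices V E A}) =
                   (\<Sum>A\<in>?Ak. card (separating_vertices V E A))"
    by (rule sum_multicount_gen)
  then show ?thesis
    using steiner_betweenness_eq[OF assms] by (simp add: conj_assoc flip: of_nat_sum)
qed

end

theorem mainTheorem5: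
  fixes V :: "'a set" and E :: "'a set set" and k :: nat
  assumes "connected_graph V E"
    and "block_graph V E"
    and "2 \<le> k" and "k \<le> card V"
  shows "real (steiner_wiener V E k) =
           (\<Sum>v\<in>{v. cut_vertex V E v}. steiner_betweenness V E k v)
           + (real k - 1) * real (card V choose k)"
proof -
  interpret conn_block_graph V E
    using assms(1,2) by unfold_locales
  have "1 \<le> k" using assms(3) by simp
  then show ?thesis
    using steiner_wiener_eq sum_steiner_betweenness_cut_vertices by (simp add: of_nat_diff)
qed

end
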